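(* Let $\mathbf{A}\in\mathbb{R}^{M\times N}$, $\mathbf{Y}\in\mathbb{R}^{M\times L}$, and let $(\mathbf{g}(t),\mathbf{V}(t))$, $t\ge0$, evolve under the continuous gradient flow of $\mathcal{L}(\mathbf{g},\mathbf{V})=\Vert\mathbf{Y}-\mathbf{A}((\mathbf{g}^{\odot 2}\mathbf{1}_L)\odot\mathbf{V})\Vert_F^2$ with initialization $\mathbf{g}(0)$ having all entries equal to $\alpha_g$ and $\mathbf{V}(0)=\alpha_V\mathbf{1}_{N\times L}$, where $\alpha_g,\alpha_V$ are small positive scalars. Let $\mathbf{X}(t)=(\mathbf{g}(t)^{\odot 2}\mathbf{1}_L)\odot\mathbf{V}(t)$, $\boldsymbol{\Lambda}(t)=\mathbf{A}^\top(\mathbf{Y}-\mathbf{A}\mathbf{X}(t))$, $\boldsymbol{\lambda}_i(t)$ the $i$-th row of $\boldsymbol{\Lambda}(t)$, and $\hat{\mathbf{x}}_i(t)=\mathbf{X}_{i:}(t)/\Vert\mathbf{X}_{i:}(t)\Vert_2$ if $\Vert\mathbf{X}_{i:}(t)\Vert_2\ne0$ and $\hat{\mathbf{x}}_i(t)=\mathbf{0}$ otherwise. Let $\epsilon=\left|\frac12\Vert\mathbf{g}(t)\Vert_2^2-\Vert\mathbf{V}(t)\Vert_F^2\right|$ (which is independent of $t$). Then for any $t\ge0$ and all $i\in[N]$ with $g_i^2(t)>0$ and $\sum_{m\in[L]}V_{im}^2(t)>0$: if $\langle\boldsymbol{\lambda}_i(t),\hat{\mathbf{x}}_i(t)\rangle\ge0$,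 then $$\frac{d}{dt}\Vert\mathbf{X}_{i:}(t)\Vert_2\le 24\langle\boldsymbol{\lambda}_i(t),\hat{\mathbf{x}}_i(t)\rangle\left(\epsilon+\Vert\mathbf{X}_{i:}(t)\Vert_2^{2/3}\right)^2,\qquad \frac{d}{dt}\Vert\mathbf{X}_{i:}(t)\Vert_2\ge 6\langle\boldsymbol{\lambda}_i(t),\hat{\mathbf{x}}_i(t)\rangle\frac{\Vert\mathbf{X}_{i:}(t)\Vert_2^2}{\epsilon+\Vert\mathbf{X}_{i:}(t)\Vert_2^{2/3}};$$ if $\langle\boldsymbol{\lambda}_i(t),\hat{\mathbf{x}}_i(t)\rangle<0$, then $$\frac{d}{dt}\Vert\mathbf{X}_{i:}(t)\Vert_2\ge 24\langle\boldsymbol{\lambda}_i(t),\hat{\mathbf{x}}_i(t)\rangle\left(\epsilon+\Vert\mathbf{X}_{i:}(t)\Vert_2^{2/3}\right)^2,\qquad \frac{d}{dt}\Vert\mathbf{X}_{i:}(t)\Vert_2\le 6\langle\boldsymbol{\lambda}_i(t),\hat{\mathbf{x}}_i(t)\rangle\frac{\Vert\mathbf{X}_{i:}(t)\Vert_2^2}{\epsilon+\Vert\mathbf{X}_{i:}(t)\Vert_2^{2/3}}.$$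
   Context: $\odot$ is the entrywise product, $\mathbf{1}_L$ the $1\times L$ all-ones row vector, $\mathbf{1}_{N\times L}$ the all-ones matrix, so $X_{ij}=g_i^2V_{ij}$; $\mathbf{X}_{i:}$ denotes the $i$-th row. Gradient flow: $\frac{d}{dt}g_l=-\partial\mathcal{L}/\partial g_l$ and $\frac{d}{dt}V_{lm}=-\partial\mathcal{L}/\partial V_{lm}$ evaluated along the curve. *)

theory Defs
  imports "HOL-Analysis.Analysis"
begin

text \<open>Matrices are indexed by finite types: A :: real^'n^'m is M x N,
  Y :: real^'l^'m is M x L, g :: real^'n, V :: real^'l^'n.\<close>

definition frob_sq :: "real^'c^'r \<Rightarrow> real" where
  "frob_sq B = (\<Sum>i\<in>UNIV. \<Sum>j\<in>UNIV. (B $ i $ j)^2)"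

definition Xmat :: "real^'n \<Rightarrow> real^'l^'n \<Rightarrow> real^'l^'n" where
  "Xmat g V = (\<chi> i j. (g $ i)^2 * V $ i $ j)"

definition loss :: "real^'n^'m \<Rightarrow> real^'l^'m \<Rightarrow> real^'n \<Rightarrow> real^'l^'n \<Rightarrow> real" where
  "loss A Y g V = frob_sq (Y - A ** Xmat g V)"

definition Lam :: "real^'n^'m \<Rightarrow> real^'l^'m \<Rightarrow> real^'n \<Rightarrow> real^'l^'n \<Rightarrow> real^'l^'n" where
  "Lam A Y g V = transpose A ** (Y - A ** Xmat g V)"

definition xhat :: "real^'l \<Rightarrow> real^'l" where
  "xhat x = (if norm x \<noteq> 0 then (1 / norm x) *\<^sub>R x else 0)"

text \<open>Gradient flow: each coordinate has a (one-sided at 0) time derivative equal to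
  minus the partial derivative of the loss in that coordinate, evaluated along the curve.\<close>
definition grad_flow :: "real^'n^'m \<Rightarrow> real^'l^'m \<Rightarrow> (real \<Rightarrow> real^'n) \<Rightarrow> (real \<Rightarrow> real^'l^'n) \<Rightarrow> bool" where
  "grad_flow A Y g V \<longleftrightarrow>
    (\<forall>t\<ge>0. (\<forall>k. \<exists>D. ((\<lambda>s. g s $ k) has_real_derivative D) (at t within {0..}) \<and>
        ((\<lambda>u. loss A Y (\<chi> k'. if k' = k then u else g t $ k') (V t)) has_real_derivative (- D)) (at (g t $ k)))
     \<and> (\<forall>k m. \<exists>D. ((\<lambda>s. V s $ k $ m) has_real_derivative D) (at t within {0..}) \<and>
        ((\<lambda>u. loss A Y (g t) (\<chi> k' m'. if k' = k \<and> m' = m then u else V t $ k' $ m'))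
            has_real_derivative (- D)) (at (V t $ k $ m))))"

end

theory Submission
  imports Defs
begin

(* Along the flow, d/dt g_k = 4 g_k <V_k, lambda_k> and d/dt V_k = 2 g_k^2 lambda_k.  Hence, with
   a = g_i^2 and n = |V_i|, the row norm |X_i| = a n has derivative <lambda_i, xhat_i> (8 a n^2 + 2 a^2),
   and every row balance g_k^2/2 - |V_k|^2 is conserved.  The uniform initialization makes all row
   balances equal, so |a/2 - n^2| <= epsilon.  What remains are two scalar inequalities for the factor
   8 a n^2 + 2 a^2 in terms of u = |X_i|^(2/3), i.e. u^3 = a^2 n^2: the lower bound 6 u^2 is AM-GM,
   the upper bound 24 (epsilon + u)^2 follows by comparing a with 2 n^2. *)

lemma frob_sq_residual_has_derivative:
  fixes A :: "real^'n^'m" and Y :: "real^'l^'m" and X :: "real \<Rightarrow> real^'l^'n"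
  assumes X': "\<And>q j. ((\<lambda>u. X u $ q $ j) has_real_derivative X' $ q $ j) (at u0)"
  shows "((\<lambda>u. frob_sq (Y - A ** X u)) has_real_derivative
           - 2 * (\<Sum>q\<in>UNIV. \<Sum>j\<in>UNIV. (transpose A ** (Y - A ** X u0)) $ q $ j * X' $ q $ j)) (at u0)"
proof -
  define R where "R p j = Y $ p $ j - (\<Sum>q\<in>UNIV. A $ p $ q * X u0 $ q $ j)" for p j
  have "((\<lambda>u. frob_sq (Y - A ** X u)) has_real_derivative
          (\<Sum>p\<in>UNIV. \<Sum>j\<in>UNIV. 2 * R p j * - (\<Sum>q\<in>UNIV. A $ p $ q * X' $ q $ j))) (at u0)"
    unfolding frob_sq_def matrix_matrix_mult_def R_def
    by (auto intro!: derivative_eq_intros X' sum.cong simp: algebra_simps)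
  also have "(\<Sum>p\<in>UNIV. \<Sum>j\<in>UNIV. 2 * R p j * - (\<Sum>q\<in>UNIV. A $ p $ q * X' $ q $ j))
      = (\<Sum>p\<in>UNIV. \<Sum>j\<in>UNIV. \<Sum>q\<in>UNIV. - 2 * (A $ p $ q * R p j * X' $ q $ j))"
    by (simp add: sum_distrib_left sum_negf mult_ac)
  also have "\<dots> = (\<Sum>p\<in>UNIV. \<Sum>q\<in>UNIV. \<Sum>j\<in>UNIV. - 2 * (A $ p $ q * R p j * X' $ q $ j))"
    by (intro sum.cong refl) (rule sum.swap)
  also have "\<dots> = (\<Sum>q\<in>UNIV. \<Sum>p\<in>UNIV. \<Sum>j\<in>UNIV. - 2 * (A $ p $ q * R p j * X' $ q $ j))"
    by (rule sum.swap)
  also have "\<dots> = (\<Sum>q\<in>UNIV. \<Sum>j\<in>UNIV. \<Sum>p\<in>UNIV. - 2 * (A $ p $ q * R p j * X' $ q $ j))"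
    by (intro sum.cong refl) (rule sum.swap)
  also have "\<dots> = - 2 * (\<Sum>q\<in>UNIV. \<Sum>j\<in>UNIV. (\<Sum>p\<in>UNIV. A $ p $ q * R p j) * X' $ q $ j)"
    by (simp add: sum_distrib_left sum_distrib_right)
  finally show ?thesis
    by (simp add: R_def matrix_matrix_mult_def transpose_def)
qed

lemma loss_has_derivative_g_coord:
  fixes A :: "real^'n^'m" and Y :: "real^'l^'m" and g :: "real^'n" and V :: "real^'l^'n"
  shows "((\<lambda>u. loss A Y (\<chi> k'. if k' = k then u else g $ k') V) has_real_derivative
           - 4 * g $ k * (V $ k \<bullet> Lam A Y g V $ k)) (at (g $ k))"
proof -
  let ?X' = "\<chi> q j. if q = k then 2 * g $ k * V $ k $ j else 0"
  have X': "((\<lambda>u. Xmat (\<chi> k'. if k' = k then u else g $ k') V $ q $ j) has_real_derivative ?X' $ q $ j)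
          (at (g $ k))" for q j
    by (cases "q = k") (auto simp: Xmat_def intro!: derivative_eq_intros)
  have "(\<chi> k'. if k' = k then g $ k else g $ k') = g"
    by (simp add: vec_eq_iff)
  with frob_sq_residual_has_derivative[OF X', of Y A]
  have "((\<lambda>u. loss A Y (\<chi> k'. if k' = k then u else g $ k') V) has_real_derivative
      - 2 * (\<Sum>q\<in>UNIV. \<Sum>j\<in>UNIV. Lam A Y g V $ q $ j * ?X' $ q $ j)) (at (g $ k))"
    by (simp add: loss_def Lam_def)
  also have "(\<Sum>q\<in>UNIV. \<Sum>j\<in>UNIV. Lam A Y g V $ q $ j * ?X' $ q $ j)
      = (\<Sum>q\<in>UNIV. if q = k then 2 * g $ k * (V $ k \<bullet> Lam A Y g V $ k) else 0)"
    by (intro sum.cong) (auto simp: inner_vec_def sum_distrib_left mult_ac)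
  finally show ?thesis
    by (simp add: mult.assoc)
qed

lemma loss_has_derivative_V_coord:
  fixes A :: "real^'n^'m" and Y :: "real^'l^'m" and g :: "real^'n" and V :: "real^'l^'n"
  shows "((\<lambda>u. loss A Y g (\<chi> k' m'. if k' = k \<and> m' = m then u else V $ k' $ m')) has_real_derivative
           - 2 * (g $ k)^2 * Lam A Y g V $ k $ m) (at (V $ k $ m))"
proof -
  let ?X' = "\<chi> q j. if q = k \<and> j = m then (g $ k)^2 else 0"
  have X': "((\<lambda>u. Xmat g (\<chi> k' m'. if k' = k \<and> m' = m then u else V $ k' $ m') $ q $ j) has_real_derivative
          ?X' $ q $ j) (at (V $ k $ m))" for q j
    by (cases "q = k \<and> j = m") (auto simp: Xmat_def intro!: derivative_eq_intros)
  have "(\<chi> k' m'. if k' = k \<and> m' = m then V $ k $ m else V $ k' $ m') = V"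
    by (simp add: vec_eq_iff)
  with frob_sq_residual_has_derivative[OF X', of Y A]
  have "((\<lambda>u. loss A Y g (\<chi> k' m'. if k' = k \<and> m' = m then u else V $ k' $ m'))
      has_real_derivative - 2 * (\<Sum>q\<in>UNIV. \<Sum>j\<in>UNIV. Lam A Y g V $ q $ j * ?X' $ q $ j))
      (at (V $ k $ m))"
    by (simp add: loss_def Lam_def)
  also have "(\<Sum>q\<in>UNIV. \<Sum>j\<in>UNIV. Lam A Y g V $ q $ j * ?X' $ q $ j)
      = (\<Sum>q\<in>UNIV. if q = k then (g $ k)^2 * Lam A Y g V $ k $ m else 0)"
    by (intro sum.cong) (auto simp: if_distrib cong: if_cong)
  finally show ?thesis
    by (simp add: mult.assoc)
qed

lemma grad_flow_g_has_derivative: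
  assumes "grad_flow A Y g V" and "t \<ge> 0"
  shows "((\<lambda>s. g s $ k) has_real_derivative 4 * g t $ k * (V t $ k \<bullet> Lam A Y (g t) (V t) $ k))
           (at t within {0..})"
proof -
  obtain D where D: "((\<lambda>s. g s $ k) has_real_derivative D) (at t within {0..})"
    and "((\<lambda>u. loss A Y (\<chi> k'. if k' = k then u else g t $ k') (V t)) has_real_derivative - D)
           (at (g t $ k))"
    using assms unfolding grad_flow_def by blast
  from DERIV_unique[OF this(2) loss_has_derivative_g_coord] D show ?thesis
    by simp
qed

lemma grad_flow_V_has_derivative:
  assumes "grad_flow A Y g V" and "t \<ge> 0"
  shows "((\<lambda>s. V s $ k $ m) has_real_derivative 2 * (g t $ k)^2 * Lam A Y (g t) (V t) $ k $ m)
           (at t within {0..})"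
proof -
  obtain D where D: "((\<lambda>s. V s $ k $ m) has_real_derivative D) (at t within {0..})"
    and "((\<lambda>u. loss A Y (g t) (\<chi> k' m'. if k' = k \<and> m' = m then u else V t $ k' $ m'))
           has_real_derivative - D) (at (V t $ k $ m))"
    using assms unfolding grad_flow_def by blast
  from DERIV_unique[OF this(2) loss_has_derivative_V_coord] D show ?thesis
    by simp
qed

lemma grad_flow_g_sq_has_derivative:
  assumes "grad_flow A Y g V" and "t \<ge> 0"
  shows "((\<lambda>s. (g s $ k)^2) has_real_derivative 8 * (g t $ k)^2 * (V t $ k \<bullet> Lam A Y (g t) (V t) $ k))
           (at t within {0..})"
  by (auto intro!: derivative_eq_intros grad_flow_g_has_derivative[OF assms] simp: power2_eq_square)

lemma grad_flow_row_norm_sq_V_has_derivative: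
  assumes "grad_flow A Y g V" and "t \<ge> 0"
  shows "((\<lambda>s. (norm (V s $ k))^2) has_real_derivative
           4 * (g t $ k)^2 * (V t $ k \<bullet> Lam A Y (g t) (V t) $ k)) (at t within {0..})"
proof -
  have sq: "(norm (V s $ k))^2 = (\<Sum>j\<in>UNIV. (V s $ k $ j)^2)" for s
    unfolding power2_norm_eq_inner inner_vec_def by (simp add: power2_eq_square)
  show ?thesis
    unfolding sq by (auto intro!: derivative_eq_intros grad_flow_V_has_derivative[OF assms] sum.cong
        simp: inner_vec_def sum_distrib_left mult_ac)
qed

lemma grad_flow_row_balance_conserved:
  assumes "grad_flow A Y g V" and "t \<ge> 0"
  shows "(g t $ k)^2 / 2 - (norm (V t $ k))^2 = (g 0 $ k)^2 / 2 - (norm (V 0 $ k))^2"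
proof -
  have "((\<lambda>s. (g s $ k)^2 / 2 - (norm (V s $ k))^2) has_real_derivative 0) (at s within {0..})"
    if "s \<in> {0..}" for s
  proof -
    have s: "s \<ge> 0"
      using that by simp
    show ?thesis
      using DERIV_diff[OF DERIV_cdivide[OF grad_flow_g_sq_has_derivative[OF assms(1) s, of k], where c = 2]
          grad_flow_row_norm_sq_V_has_derivative[OF assms(1) s, of k]]
      by simp
  qed
  from has_field_derivative_zero_constant[OF convex_real_interval(1) this]
  obtain c where "\<forall>s\<in>{0..}. (g s $ k)^2 / 2 - (norm (V s $ k))^2 = c"
    by blast
  then show ?thesis
    using assms(2) by auto
qed

lemma Xmat_row: "Xmat g V $ i = (g $ i)^2 *\<^sub>R V $ i"
  by (simp add: Xmat_def vec_eq_iff)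

lemma xhat_scaleR_pos: "c > 0 \<Longrightarrow> xhat (c *\<^sub>R x) = xhat x"
  by (simp add: xhat_def)

lemma grad_flow_row_norm_V_has_derivative:
  assumes "grad_flow A Y g V" and "t \<ge> 0" and "V t $ k \<noteq> 0"
  shows "((\<lambda>s. norm (V s $ k)) has_real_derivative
           2 * (g t $ k)^2 * (V t $ k \<bullet> Lam A Y (g t) (V t) $ k) / norm (V t $ k)) (at t within {0..})"
proof -
  have "((\<lambda>s. sqrt ((norm (V s $ k))^2)) has_real_derivative
          inverse (sqrt ((norm (V t $ k))^2)) / 2 * (4 * (g t $ k)^2 * (V t $ k \<bullet> Lam A Y (g t) (V t) $ k)))
          (at t within {0..})"
    using DERIV_chain2[OF DERIV_real_sqrt grad_flow_row_norm_sq_V_has_derivative[OF assms(1,2)]] assms(3)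
    by simp
  then show ?thesis
    by (simp add: field_simps)
qed

lemma grad_flow_row_norm_Xmat_has_derivative:
  assumes "grad_flow A Y g V" and "t \<ge> 0" and "V t $ i \<noteq> 0"
  shows "((\<lambda>s. norm (Xmat (g s) (V s) $ i)) has_real_derivative
           (Lam A Y (g t) (V t) $ i \<bullet> xhat (V t $ i)) *
           (8 * (g t $ i)^2 * (norm (V t $ i))^2 + 2 * ((g t $ i)^2)^2)) (at t within {0..})"
proof -
  define a n S where "a = (g t $ i)^2" and "n = norm (V t $ i)"
    and "S = V t $ i \<bullet> Lam A Y (g t) (V t) $ i"
  have n: "n > 0"
    using assms(3) by (simp add: n_def)
  have "((\<lambda>s. (g s $ i)^2 * norm (V s $ i)) has_real_derivative 8 * a * S * n + 2 * a * S / n * a)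
          (at t within {0..})"
    unfolding a_def n_def S_def
    by (rule DERIV_mult[OF grad_flow_g_sq_has_derivative[OF assms(1,2)] grad_flow_row_norm_V_has_derivative[OF assms]])
  moreover have "8 * a * S * n + 2 * a * S / n * a = (S / n) * (8 * a * n^2 + 2 * a^2)"
    using n by (simp add: field_simps power2_eq_square)
  moreover have "Lam A Y (g t) (V t) $ i \<bullet> xhat (V t $ i) = S / n"
    using n by (simp add: xhat_def S_def n_def inner_commute)
  ultimately show ?thesis
    by (simp add: Xmat_row a_def n_def)
qed

lemma half_norm_sq_minus_frob_sq_eq:
  "(1/2) * (norm g)^2 - frob_sq V = (\<Sum>k\<in>UNIV. (g $ k)^2 / 2 - (norm (V $ k))^2)"
  unfolding frob_sq_def power2_norm_eq_inner inner_vec_def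
  by (simp add: power2_eq_square sum_subtractf sum_divide_distrib)

lemma grad_flow_uniform_init_row_balance_le:
  fixes g :: "real \<Rightarrow> real^'n" and V :: "real \<Rightarrow> real^'l^'n"
  assumes "grad_flow A Y g V" and "g 0 = (\<chi> k. \<alpha>g)" and "V 0 = (\<chi> k m. \<alpha>V)" and "t \<ge> 0"
  shows "\<bar>(g t $ i)^2 / 2 - (norm (V t $ i))^2\<bar> \<le> \<bar>(1/2) * (norm (g t))^2 - frob_sq (V t)\<bar>"
proof -
  define c where "c = (g t $ i)^2 / 2 - (norm (V t $ i))^2"
  have "(g t $ k)^2 / 2 - (norm (V t $ k))^2 = c" for k
    using grad_flow_row_balance_conserved[OF assms(1,4), of k] grad_flow_row_balance_conserved[OF assms(1,4), of i]
    by (simp add: c_def assms(2,3))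
  then have "(1/2) * (norm (g t))^2 - frob_sq (V t) = real CARD('n) * c"
    unfolding half_norm_sq_minus_frob_sq_eq by simp
  moreover have "\<bar>c\<bar> \<le> real CARD('n) * \<bar>c\<bar>"
    using mult_right_mono[of 1 "real CARD('n)" "\<bar>c\<bar>"] by simp
  ultimately show ?thesis
    by (simp add: c_def abs_mult)
qed

lemma powr_two_thirds_cube: "(x :: real) \<ge> 0 \<Longrightarrow> (x powr (2/3))^3 = x^2"
  by (cases "x = 0") (simp_all add: powr_power)

lemma power3_le_imp_le: "(x :: real)^3 \<le> y^3 \<Longrightarrow> 0 \<le> y \<Longrightarrow> x \<le> y"
  using power_le_imp_le_base[of x 2 y] by (simp add: numeral_3_eq_3)

lemma growth_factor_ge_cube_root_sq:
  fixes a b u :: real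
  assumes "a \<ge> 0" and "b \<ge> 0" and "u \<ge> 0" and "u^3 = a^2 * b"
  shows "6 * u^2 \<le> 8 * a * b + 2 * a^2"
proof -
  have "(4 * b + a)^3 = 27 * a * b^2 + (64 * b^3 + 21 * a * b^2 + 12 * a^2 * b + a^3)"
    by algebra
  moreover have "0 \<le> 64 * b^3 + 21 * a * b^2 + 12 * a^2 * b + a^3"
    using assms by simp
  ultimately have "27 * a * b^2 \<le> (4 * b + a)^3"
    by linarith
  then have "8 * a^3 * (27 * a * b^2) \<le> 8 * a^3 * (4 * b + a)^3"
    using assms(1) by (intro mult_left_mono) auto
  moreover have "(6 * u^2)^3 = 8 * a^3 * (27 * a * b^2)"
  proof -
    have "(6 * u^2)^3 = 216 * (u^3)^2"
      by algebra
    also have "\<dots> = 216 * (a^2 * b)^2"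
      using assms(4) by simp
    also have "\<dots> = 8 * a^3 * (27 * a * b^2)"
      by algebra
    finally show ?thesis .
  qed
  moreover have "(8 * a * b + 2 * a^2)^3 = 8 * a^3 * (4 * b + a)^3"
    by algebra
  ultimately have "(6 * u^2)^3 \<le> (8 * a * b + 2 * a^2)^3"
    by linarith
  moreover have "0 \<le> 8 * a * b + 2 * a^2"
    using assms by simp
  ultimately show ?thesis
    by (rule power3_le_imp_le)
qed

lemma growth_factor_le_balance_cube_root:
  fixes a b u e :: real
  assumes "a \<ge> 0" and "b \<ge> 0" and "u \<ge> 0" and "u^3 = a^2 * b" and "\<bar>a/2 - b\<bar> \<le> e"
  shows "8 * a * b + 2 * a^2 \<le> 24 * (e + u)^2"
proof (cases "a \<ge> 2 * b")
  case True
  have "b^2 * b \<le> a^2 * b"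
    using True assms(2) by (intro mult_right_mono power_mono) auto
  then have "b^3 \<le> u^3"
    unfolding assms(4) by (simp add: power3_eq_cube power2_eq_square)
  then have "b \<le> u"
    using assms(3) by (rule power3_le_imp_le)
  then have "a \<le> 2 * (e + u)"
    using abs_le_D1[OF assms(5)] by (simp add: field_simps)
  then have "a^2 \<le> (2 * (e + u))^2"
    using assms(1) by (rule power_mono)
  then have "a^2 \<le> 4 * (e + u)^2"
    unfolding power_mult_distrib by simp
  moreover have "8 * a * b \<le> 4 * a^2"
    using mult_left_mono[OF True assms(1)] by (simp add: power2_eq_square)
  ultimately show ?thesis
    by linarith
next
  case False
  have "a^3 \<le> 2 * (a^2 * b)"
    using mult_left_mono[of a "2 * b" "a^2"] False by (simp add: power3_eq_cube power2_eq_square mult_ac)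
  moreover have "0 \<le> a^2 * b"
    using assms(2) by simp
  ultimately have "a^3 \<le> 8 * u^3"
    unfolding assms(4) by linarith
  then have "a^3 \<le> (2 * u)^3"
    by (simp add: power_mult_distrib)
  then have "a \<le> 2 * u"
    by (rule power3_le_imp_le) (use assms(3) in simp)
  have "e \<ge> 0"
    using assms(5) by linarith
  have "8 * a * b \<le> 8 * a * (a/2 + e)"
    using assms(1,5) by (intro mult_left_mono) auto
  then have "8 * a * b + 2 * a^2 \<le> 6 * a^2 + 8 * a * e"
    by (simp add: algebra_simps power2_eq_square)
  also have "\<dots> \<le> 6 * (2 * u)^2 + 8 * (2 * u) * e"
  proof -
    have "a^2 \<le> (2 * u)^2"
      using \<open>a \<le> 2 * u\<close> assms(1) by (rule power_mono)
    moreover have "a * e \<le> 2 * u * e"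
      using \<open>a \<le> 2 * u\<close> \<open>e \<ge> 0\<close> by (rule mult_right_mono)
    ultimately show ?thesis
      by linarith
  qed
  also have "\<dots> \<le> 24 * (e + u)^2"
    using \<open>e \<ge> 0\<close> assms(3) by (simp add: power2_eq_square algebra_simps)
  finally show ?thesis .
qed

lemma growth_factor_bounds:
  fixes a n e :: real
  assumes "a > 0" and "n > 0" and "\<bar>a/2 - n^2\<bar> \<le> e"
  shows "6 * (a * n)^2 / (e + (a * n) powr (2/3)) \<le> 8 * a * n^2 + 2 * a^2"
    and "8 * a * n^2 + 2 * a^2 \<le> 24 * (e + (a * n) powr (2/3))^2"
proof -
  define u where "u = (a * n) powr (2/3)"
  have "u > 0"
    using assms(1,2) by (simp add: u_def)
  have "u^3 = a^2 * n^2"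
    using assms(1,2) by (simp add: u_def powr_two_thirds_cube power_mult_distrib)
  have "e \<ge> 0"
    using assms(3) by linarith
  have "6 * (a * n)^2 / (e + u) = 6 * u^3 / (e + u)"
    by (simp add: \<open>u^3 = a^2 * n^2\<close> power_mult_distrib)
  also have "\<dots> \<le> 6 * u^3 / u"
    using \<open>u > 0\<close> \<open>e \<ge> 0\<close> by (intro divide_left_mono) auto
  also have "\<dots> = 6 * u^2"
    using \<open>u > 0\<close> by (simp add: power3_eq_cube power2_eq_square)
  also have "\<dots> \<le> 8 * a * n^2 + 2 * a^2"
    using assms(1) \<open>u > 0\<close> \<open>u^3 = a^2 * n^2\<close> by (intro growth_factor_ge_cube_root_sq) auto
  finally show "6 * (a * n)^2 / (e + (a * n) powr (2/3)) \<le> 8 * a * n^2 + 2 * a^2"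
    unfolding u_def .
  show "8 * a * n^2 + 2 * a^2 \<le> 24 * (e + (a * n) powr (2/3))^2"
    using growth_factor_le_balance_cube_root[of a "n^2" u e] assms \<open>u > 0\<close> \<open>u^3 = a^2 * n^2\<close>
    by (simp add: u_def)
qed

theorem lemma5p2:
  fixes A :: "real^'n^'m" and Y :: "real^'l^'m"
    and g :: "real \<Rightarrow> real^'n" and V :: "real \<Rightarrow> real^'l^'n"
    and \<alpha>g \<alpha>V t :: real and i :: 'n
  assumes "\<alpha>g > 0" and "\<alpha>V > 0"
    and "grad_flow A Y g V"
    and "g 0 = (\<chi> k. \<alpha>g)" and "V 0 = (\<chi> k m. \<alpha>V)"
    and "t \<ge> 0"
    and "(g t $ i)^2 > 0" and "(\<Sum>m\<in>UNIV. (V t $ i $ m)^2) > 0"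
  shows "let \<epsilon> = \<bar>(1/2) * (norm (g t))^2 - frob_sq (V t)\<bar>;
             nx = norm (Xmat (g t) (V t) $ i);
             ip = (Lam A Y (g t) (V t) $ i) \<bullet> xhat (Xmat (g t) (V t) $ i)
         in \<exists>D. ((\<lambda>s. norm (Xmat (g s) (V s) $ i)) has_real_derivative D) (at t within {0..}) \<and>
              (ip \<ge> 0 \<longrightarrow> D \<le> 24 * ip * (\<epsilon> + nx powr (2/3))^2 \<and>
                            D \<ge> 6 * ip * nx^2 / (\<epsilon> + nx powr (2/3))) \<and>
              (ip < 0 \<longrightarrow> D \<ge> 24 * ip * (\<epsilon> + nx powr (2/3))^2 \<and>
                          D \<le> 6 * ip * nx^2 / (\<epsilon> + nx powr (2/3)))"
proof -
  define a n \<epsilon> where "a = (g t $ i)^2" and "n = norm (V t $ i)"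
    and "\<epsilon> = \<bar>(1/2) * (norm (g t))^2 - frob_sq (V t)\<bar>"
  define ip K where "ip = Lam A Y (g t) (V t) $ i \<bullet> xhat (V t $ i)"
    and "K = 8 * a * n^2 + 2 * a^2"
  have "V t $ i \<noteq> 0"
    using assms(8) by auto
  then have "n > 0"
    by (simp add: n_def)
  have "a > 0"
    using assms(7) by (simp add: a_def)
  have xhat_eq: "xhat (Xmat (g t) (V t) $ i) = xhat (V t $ i)"
    using \<open>a > 0\<close> by (simp add: Xmat_row xhat_scaleR_pos a_def)
  have norm_eq: "norm (Xmat (g t) (V t) $ i) = a * n"
    by (simp add: Xmat_row a_def n_def)
  have "\<bar>a/2 - n^2\<bar> \<le> \<epsilon>"
    using grad_flow_uniform_init_row_balance_le[OF assms(3-6)] by (simp add: a_def n_def \<epsilon>_def)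
  note bounds = growth_factor_bounds[OF \<open>a > 0\<close> \<open>n > 0\<close> this, folded K_def]
  have "((\<lambda>s. norm (Xmat (g s) (V s) $ i)) has_real_derivative ip * K) (at t within {0..})"
    using grad_flow_row_norm_Xmat_has_derivative[OF assms(3,6) \<open>V t $ i \<noteq> 0\<close>]
    by (simp add: ip_def K_def a_def n_def)
  then show ?thesis
    unfolding Let_def \<epsilon>_def[symmetric] xhat_eq norm_eq ip_def[symmetric]
    using mult_left_mono[OF bounds(1), of ip] mult_left_mono[OF bounds(2), of ip]
      mult_left_mono_neg[OF bounds(1), of ip] mult_left_mono_neg[OF bounds(2), of ip]
    by (auto simp: mult_ac)
qed

end
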